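(* For any $n,T\in\mathbb{N}$ and $\epsilon>0$, the exponential projected walk algorithm $\mathrm{EPW}(T,\epsilon)$ is an $\epsilon$-differentially private prediction algorithm.
   Context: Let $N\in\mathbb{N}$, $[N]=\{1,\dots,N\}$. For $A\le B$, $\mathrm{proj}_{[A,B]}(u)$ denotes the projection of $u\in\mathbb{R}$ onto $[A,B]$. The algorithm $\mathrm{EPW}(T,\epsilon)$ takes a dataset $S=((x_1,y_1),\dots,(x_n,y_n))\in([N]\times\{0,1\})^n$, arranged in sorted order $x_1\le x_2\le\dots\le x_n$, and a query point $x\in[N]$. Let $t$ be the number of examples with $x_i\le x$. Set $v_0=0$ and for $i=1,\dots,t$ set $v_i=\mathrm{proj}_{[-T,T]}(v_{i-1}+(2y_i-1))$. Output $b=1$ with probability $\frac{e^{\epsilon v_t/2}}{1+e^{\epsilon v_t/2}}$ and $b=0$ otherwise. A prediction algorithm $M$ is an $\epsilon$-differentially private prediction algorithm if for every query point $x$, for all datasets $S,S'$ differing in a single element and every $b$, $\Pr[M(S,x)=b]\le e^{\epsilon}\Pr[M(S',x)=b]$. *)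

theory Defs
  imports Complex_Main "HOL-Library.Product_Lexorder"
begin

text \<open>The algorithm first arranges the dataset in sorted order; ties in x are broken
  lexicographically by the label (a fixed deterministic tie-break).\<close>

definition proj :: "int \<Rightarrow> int \<Rightarrow> int \<Rightarrow> int" where
  "proj A B u = max A (min B u)"

definition epw_walk :: "nat \<Rightarrow> bool list \<Rightarrow> int" where
  "epw_walk T ys = foldl (\<lambda>v y. proj (- int T) (int T) (v + (2 * of_bool y - 1))) 0 ys"

definition epw_value :: "nat \<Rightarrow> (nat \<times> bool) list \<Rightarrow> nat \<Rightarrow> int" where
  "epw_value T S x =
     (let t = length (filter (\<lambda>p. fst p \<le> x) S)
      in epw_walk T (map snd (take t (sort S))))"

text \<open>Output distribution of EPW(T, eps): probability that the output equals b.\<close>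
definition EPW :: "nat \<Rightarrow> real \<Rightarrow> (nat \<times> bool) list \<Rightarrow> nat \<Rightarrow> bool \<Rightarrow> real" where
  "EPW T eps S x b =
     (let v = real_of_int (epw_value T S x);
          p = exp (eps * v / 2) / (1 + exp (eps * v / 2))
      in if b then p else 1 - p)"

definition valid_dataset :: "nat \<Rightarrow> nat \<Rightarrow> (nat \<times> bool) list \<Rightarrow> bool" where
  "valid_dataset N n S \<longleftrightarrow> length S = n \<and> (\<forall>p \<in> set S. fst p \<in> {1..N})"

definition neighbours :: "'a list \<Rightarrow> 'a list \<Rightarrow> bool" where
  "neighbours S S' \<longleftrightarrow> length S = length S' \<and>
     (\<exists>i < length S. \<forall>j < length S. j \<noteq> i \<longrightarrow> S ! j = S' ! j)"

text \<open>M S x b = Pr[M(S,x) = b]. M is an eps-DP prediction algorithm (datasets of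
  size n over [N] \<times> {0,1}).\<close>
definition dp_prediction :: "nat \<Rightarrow> nat \<Rightarrow> real \<Rightarrow>
    ((nat \<times> bool) list \<Rightarrow> nat \<Rightarrow> bool \<Rightarrow> real) \<Rightarrow> bool" where
  "dp_prediction N n eps M \<longleftrightarrow>
     (\<forall>x \<in> {1..N}. \<forall>S S'. valid_dataset N n S \<and> valid_dataset N n S' \<and> neighbours S S'
        \<longrightarrow> (\<forall>b. M S x b \<le> exp eps * M S' x b))"

end

theory Submission
  imports Defs "HOL-Library.Multiset"
begin

text \<open>Changing one example moves the walk's final value by at most 2: the final
  value only depends on the multiset of examples left of the query, and inserting
  one step into a walk that is projected onto an interval changes its end point by
  at most 1, because a single step moves by at most 1 and projection is
  non-expansive. The output is the logistic function of \<open>\<epsilon> v / 2\<close>, whose value and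
  complement both change by at most a factor \<open>e\<^sup>\<epsilon>\<close> when \<open>v\<close> moves by 2.\<close>

lemma proj_nonexpansive: "\<bar>proj A B u - proj A B v\<bar> \<le> \<bar>u - v\<bar>"
  unfolding proj_def by auto

lemma proj_id: "A \<le> u \<Longrightarrow> u \<le> B \<Longrightarrow> proj A B u = u"
  unfolding proj_def by simp

lemma proj_bounds: "A \<le> B \<Longrightarrow> A \<le> proj A B u \<and> proj A B u \<le> B"
  unfolding proj_def by simp

definition walk_step :: "nat \<Rightarrow> int \<Rightarrow> bool \<Rightarrow> int" where
  "walk_step T v y = proj (- int T) (int T) (v + (2 * of_bool y - 1))"

lemma epw_walk_eq_foldl: "epw_walk T ys = foldl (walk_step T) 0 ys"
  unfolding epw_walk_def walk_step_def by simp

lemma foldl_walk_step_nonexpansive: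
  "\<bar>foldl (walk_step T) v ys - foldl (walk_step T) w ys\<bar> \<le> \<bar>v - w\<bar>"
proof (induction ys arbitrary: v w)
  case (Cons y ys)
  have "\<bar>walk_step T v y - walk_step T w y\<bar> \<le> \<bar>v - w\<bar>"
    unfolding walk_step_def
    using proj_nonexpansive[of _ _ "v + (2 * of_bool y - 1)" "w + (2 * of_bool y - 1)"] by simp
  with Cons.IH[of "walk_step T v y" "walk_step T w y"] show ?case by simp
qed simp

lemma foldl_walk_step_bounded:
  "\<bar>v\<bar> \<le> int T \<Longrightarrow> \<bar>foldl (walk_step T) v ys\<bar> \<le> int T"
proof (induction ys arbitrary: v)
  case (Cons y ys)
  have "\<bar>walk_step T v y\<bar> \<le> int T"
    unfolding walk_step_def using proj_bounds[of "- int T" "int T" "v + (2 * of_bool y - 1)"]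
    by linarith
  with Cons.IH show ?case by simp
qed simp

lemma walk_step_moves_at_most_one:
  assumes "\<bar>v\<bar> \<le> int T"
  shows "\<bar>walk_step T v y - v\<bar> \<le> 1"
proof -
  have "v = proj (- int T) (int T) v" using assms by (simp add: proj_id)
  then show ?thesis
    unfolding walk_step_def
    using proj_nonexpansive[of "- int T" "int T" "v + (2 * of_bool y - 1)" v] by (cases y) simp_all
qed

lemma epw_walk_insert: "\<bar>epw_walk T (as @ y # bs) - epw_walk T (as @ bs)\<bar> \<le> 1"
proof -
  define u where "u = foldl (walk_step T) 0 as"
  have "\<bar>u\<bar> \<le> int T" unfolding u_def using foldl_walk_step_bounded[of 0 T] by simp
  then have "\<bar>walk_step T u y - u\<bar> \<le> 1" by (rule walk_step_moves_at_most_one)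
  then show ?thesis
    using foldl_walk_step_nonexpansive[of T "walk_step T u y" bs u]
    by (simp add: epw_walk_eq_foldl u_def)
qed

lemma insort_eq_takeWhile_dropWhile:
  "insort x xs = takeWhile (\<lambda>y. \<not> x \<le> y) xs @ x # dropWhile (\<lambda>y. \<not> x \<le> y) xs"
  by (induction xs) auto

lemma epw_walk_insort:
  "\<bar>epw_walk T (map snd (insort e xs)) - epw_walk T (map snd xs)\<bar> \<le> 1"
proof -
  have "map snd xs =
      map snd (takeWhile (\<lambda>y. \<not> e \<le> y) xs) @ map snd (dropWhile (\<lambda>y. \<not> e \<le> y) xs)"
    by (simp flip: map_append)
  then show ?thesis
    using epw_walk_insert[of T "map snd (takeWhile (\<lambda>y. \<not> e \<le> y) xs)" "snd e"
        "map snd (dropWhile (\<lambda>y. \<not> e \<le> y) xs)"]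
    by (simp add: insort_eq_takeWhile_dropWhile)
qed

lemma sorted_filter_downward_closed:
  assumes "sorted xs" and downward_closed: "\<And>p q. p \<le> q \<Longrightarrow> P q \<Longrightarrow> P p"
  shows "take (length (filter P xs)) xs = filter P xs"
  using assms(1)
proof (induction xs)
  case (Cons a xs)
  show ?case
  proof (cases "P a")
    case False
    with Cons.prems downward_closed have "filter P xs = []"
      by (auto simp: filter_empty_conv)
    with False show ?thesis by simp
  qed (use Cons in simp)
qed simp

lemma epw_value_eq_walk_sort_filter:
  "epw_value T S x = epw_walk T (map snd (sort (filter (\<lambda>p. fst p \<le> x) S)))"
proof -
  let ?P = "\<lambda>p::nat \<times> bool. fst p \<le> x"
  have "length (filter ?P S) = length (filter ?P (sort S))"
    by (metis filter_sort length_sort)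
  moreover have "take (length (filter ?P (sort S))) (sort S) = filter ?P (sort S)"
    by (rule sorted_filter_downward_closed) (auto simp: less_eq_prod_def)
  ultimately show ?thesis
    unfolding epw_value_def Let_def by (simp add: filter_sort)
qed

lemma epw_value_mset_eq:
  "mset S = mset S' \<Longrightarrow> epw_value T S x = epw_value T S' x"
  unfolding epw_value_eq_walk_sort_filter
  by (metis mset_filter sorted_list_of_multiset_mset)

lemma epw_value_insert:
  "\<bar>epw_value T (as @ e # bs) x - epw_value T (as @ bs) x\<bar> \<le> 1"
proof -
  have "epw_value T (as @ e # bs) x = epw_value T (e # as @ bs) x"
    by (rule epw_value_mset_eq) simp
  then show ?thesis
    by (cases "fst e \<le> x") (simp_all add: epw_value_eq_walk_sort_filter epw_walk_insort)
qed

lemma neighbours_obtain_split: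
  assumes "neighbours S S'"
  obtains as e e' bs where "S = as @ e # bs" and "S' = as @ e' # bs"
proof -
  from assms obtain i where len: "length S = length S'" and i: "i < length S"
    and agree: "\<forall>j < length S. j \<noteq> i \<longrightarrow> S ! j = S' ! j"
    unfolding neighbours_def by blast
  have "take i S' = take i S" "drop (Suc i) S' = drop (Suc i) S"
    using len agree by (auto intro!: nth_equalityI)
  then show thesis
    using that id_take_nth_drop[OF i] id_take_nth_drop[of i S'] i len by metis
qed

lemma epw_value_neighbours:
  assumes "neighbours S S'"
  shows "\<bar>epw_value T S x - epw_value T S' x\<bar> \<le> 2"
proof -
  obtain as e e' bs where S: "S = as @ e # bs" and S': "S' = as @ e' # bs"
    using neighbours_obtain_split[OF assms] .
  show ?thesis
    unfolding S S' using epw_value_insert[of T as e bs x] epw_value_insert[of T as e' bs x]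
    by linarith
qed

lemma inverse_one_plus_exp_ratio:
  fixes a a' eps :: real
  assumes "\<bar>a - a'\<bar> \<le> eps"
  shows "1 / (1 + exp a) \<le> exp eps * (1 / (1 + exp a'))"
proof -
  have "1 \<le> exp eps" using assms by simp
  moreover have "exp a' \<le> exp eps * exp a"
    using assms by (simp flip: exp_add)
  ultimately have "1 + exp a' \<le> exp eps * (1 + exp a)"
    unfolding distrib_left mult_1_right by (rule add_mono)
  then show ?thesis
    by (simp add: divide_simps add_pos_pos mult.commute)
qed

lemma logistic_ratio:
  fixes a a' eps :: real
  assumes "\<bar>a - a'\<bar> \<le> eps"
  shows "exp a / (1 + exp a) \<le> exp eps * (exp a' / (1 + exp a'))"
    and "1 - exp a / (1 + exp a) \<le> exp eps * (1 - exp a' / (1 + exp a'))"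
proof -
  have nonzero: "1 + exp b \<noteq> 0" for b :: real
    using exp_gt_zero[of b] by linarith
  have logistic: "exp b / (1 + exp b) = 1 / (1 + exp (- b))" for b :: real
    using nonzero[of b] by (simp add: exp_minus field_simps)
  have complement: "1 - exp b / (1 + exp b) = 1 / (1 + exp b)" for b :: real
    using nonzero[of b] by (simp add: field_simps)
  show "exp a / (1 + exp a) \<le> exp eps * (exp a' / (1 + exp a'))"
    using inverse_one_plus_exp_ratio[of "- a" "- a'" eps] assms by (simp add: logistic)
  show "1 - exp a / (1 + exp a) \<le> exp eps * (1 - exp a' / (1 + exp a'))"
    using inverse_one_plus_exp_ratio[OF assms] by (simp add: complement)
qed

theorem lemma23:
  fixes N n T :: nat and eps :: real
  assumes "eps > 0"
  shows "dp_prediction N n eps (EPW T eps)"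
  unfolding dp_prediction_def
proof (intro ballI allI impI)
  fix x S S' b
  assume "valid_dataset N n S \<and> valid_dataset N n S' \<and> neighbours S S'"
  then have "\<bar>epw_value T S x - epw_value T S' x\<bar> \<le> 2"
    using epw_value_neighbours by blast
  then have "\<bar>real_of_int (epw_value T S x) - real_of_int (epw_value T S' x)\<bar> \<le> 2"
    by linarith
  then have "\<bar>eps * real_of_int (epw_value T S x) / 2
      - eps * real_of_int (epw_value T S' x) / 2\<bar> \<le> eps"
    using assms by (simp add: abs_mult flip: right_diff_distrib diff_divide_distrib)
  then show "EPW T eps S x b \<le> exp eps * EPW T eps S' x b"
    unfolding EPW_def Let_def using logistic_ratio by simp
qed

end
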